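(* Fix a finite alphabet $\mathcal{X}$, integers $M_1\ge M_2\ge1$, reals $\alpha,\beta>0$ and $\lambda_1,\lambda_2>0$; let $\xi_N=\lceil\alpha N\rceil$, $\chi_N=\lceil\beta N\rceil$. For each $N$ consider the one-step fixed-length test $\Phi_{\mathrm{FL},N}^{\mathrm{uk}}$ which observes $(\mathbf{X}^{\xi_N},\mathbf{Y}^{\chi_N})$, forms for each $(h,t)\in\mathcal{M}$ the events $\mathcal{B}_{h,t}^N=\{\mathrm{S}_t^h(\mathbf{X}^{\xi_N},\mathbf{Y}^{\chi_N})\le\lambda_1\}\cap\{\min_{\bar t\in[T_h],\bar t\ne t}\mathrm{S}_{\bar t}^h(\mathbf{X}^{\xi_N},\mathbf{Y}^{\chi_N})>\lambda_2\}$, and decides $\mathrm{H}_l^K$ if $\mathcal{B}_{K,l}^N\cap\bigcap_{(h,t)\in\mathcal{M},(h,t)\ne(K,l)}(\mathcal{B}_{h,t}^N)^c$ occurs for some $(K,l)\in\mathcal{M}$, and $\mathrm{H}_{\mathrm{r}}$ otherwise. Then: (i) for every $(P^{M_1},Q^{M_2})\in\mathcal{P}_0$, $\liminf_{N\to\infty}-\frac1N\log\eta(\Phi_{\mathrm{FL},N}^{\mathrm{uk}}|P^{M_1},Q^{M_2})\ge E_{\mathrm{r}}(\lambda_1,P^{M_1},Q^{M_2})$; (ii) for every $(K,l)\in\mathcal{M}$ and every $(P^{M_1},Q^{M_2})\in\mathcal{P}_l^K$, $\liminf_{N\to\infty}-\frac1N\log\bar\beta(\Phi_{\mathrm{FL},N}^{\mathrm{uk}}|P^{M_1},Q^{M_2})\ge\min\{G(\lambda_1,P^{M_1},Q^{M_2}),\lambda_2\}$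 and $\liminf_{N\to\infty}-\frac1N\log\zeta(\Phi_{\mathrm{FL},N}^{\mathrm{uk}}|P^{M_1},Q^{M_2})\ge\min\{\lambda_1,\lambda_2,G(\lambda_1,P^{M_1},Q^{M_2}),F(\lambda_2,P^{M_1},Q^{M_2})\}$.
   Context: Model: $\mathcal{P}(\mathcal{X})$ is the set of distributions on $\mathcal{X}$. For $i\in[M_1]$, $X_i^{\xi_N}=(X_{i,1},\dots,X_{i,\xi_N})$ i.i.d. $P_i$; for $j\in[M_2]$, $Y_j^{\chi_N}$ i.i.d. $Q_j$; all independent; within each database distributions are distinct. For $K\in[M_2]$, a $K$-match is a set of $K$ pairs in $[M_1]\times[M_2]$ with no two sharing a first or second coordinate; there are $T_K=\binom{M_1}{K}\binom{M_2}{K}K!$, enumerated $\mathcal{M}_1^K,\dots,\mathcal{M}_{T_K}^K$; $\mathcal{M}:=\{(h,t):h\in[M_2],t\in[T_h]\}$. Hypothesis $\mathrm{H}_l^K$: $(P^{M_1},Q^{M_2})\in\mathcal{P}_l^K:=\{\tilde P_i=\tilde Q_j\text{ iff }(i,j)\in\mathcal{M}_l^K\}$ (probability $\mathbb{P}_l^K$); null hypothesis $\mathrm{H}_{\mathrm{r}}$: $(P^{M_1},Q^{M_2})\in\mathcal{P}_0:=\{\tilde P_i\ne\tilde Q_j\ \forall i,j\}$ (probability $\mathbb{P}_{\mathrm{r}}$). Error probabilities of a test with decision $\phi$: under $\mathrm{H}_l^K$, mismatch $\bar\beta=\mathbb{P}_l^K\{\phi\notin\{\mathrm{H}_l^K,\mathrm{H}_{\mathrm{r}}\}\}$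 and false reject $\zeta=\mathbb{P}_l^K\{\phi=\mathrm{H}_{\mathrm{r}}\}$; under $\mathrm{H}_{\mathrm{r}}$, false alarm $\eta=\mathbb{P}_{\mathrm{r}}\{\phi\ne\mathrm{H}_{\mathrm{r}}\}$. Notation: $\hat T_{x^n}$ is the type of $x^n$; $D$ is KL divergence; $R_{\alpha,\beta}^{P,Q}=\frac{\alpha P+\beta Q}{\alpha+\beta}$; $\mathrm{GJS}(P,Q,\alpha,\beta)=\alpha D(P\|R_{\alpha,\beta}^{P,Q})+\beta D(Q\|R_{\alpha,\beta}^{P,Q})$; $\mathrm{G}_t^h(P^{M_1},Q^{M_2},\alpha,\beta)=\sum_{(i,j)\in\mathcal{M}_t^h}\mathrm{GJS}(P_i,Q_j,\alpha,\beta)$; $\mathrm{S}_t^h(\mathbf{x}^{\xi_N},\mathbf{y}^{\chi_N})=\mathrm{G}_t^h((\hat T_{x_i^{\xi_N}})_i,(\hat T_{y_j^{\chi_N}})_j,\alpha,\beta)$; $E(P^{M_1},Q^{M_2},\Omega^{M_1},\Psi^{M_2},\alpha,\beta)=\sum_i\alpha D(\Omega_i\|P_i)+\sum_j\beta D(\Psi_j\|Q_j)$. $E_{\mathrm{r}}(\lambda,P^{M_1},Q^{M_2})=\min_{(h,t)\in\mathcal{M}}\min_{(\Omega^{M_1},\Psi^{M_2})\in\mathcal{P}(\mathcal{X})^{M_1+M_2}:\mathrm{G}_t^h(\Omega^{M_1},\Psi^{M_2},\alpha,\beta)\le\lambda}E(\cdot)$. For $(P^{M_1},Q^{M_2})\in\mathcal{P}_l^K$: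 $G(\lambda,P^{M_1},Q^{M_2})=\min_{(h,t)\in\mathcal{M}:h>K}\min_{(\Omega^{M_1},\Psi^{M_2}):\mathrm{G}_t^h(\Omega^{M_1},\Psi^{M_2},\alpha,\beta)\le\lambda}E(P^{M_1},Q^{M_2},\Omega^{M_1},\Psi^{M_2},\alpha,\beta)$ (minimum over an empty set is $+\infty$), and $F(\lambda,P^{M_1},Q^{M_2})=\min_{(t_1,t_2)\in[T_K]^2,t_1\ne t_2}\min_{(\Omega^{M_1},\Psi^{M_2}):\mathrm{G}_{t_1}^K(\Omega^{M_1},\Psi^{M_2},\alpha,\beta)\le\lambda,\ \mathrm{G}_{t_2}^K(\Omega^{M_1},\Psi^{M_2},\alpha,\beta)\le\lambda}E(P^{M_1},Q^{M_2},\Omega^{M_1},\Psi^{M_2},\alpha,\beta)$. *)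

theory Defs
  imports Complex_Main "HOL-Library.Extended_Real" "HOL-Library.FuncSet" "HOL-Library.Liminf_Limsup"
begin

text \<open>A database of M distributions is a function
  nat => ('a => real), used on the indices {..<M} (i.e. [M] shifted to start at 0).\<close>

definition is_dist :: "('a::finite \<Rightarrow> real) \<Rightarrow> bool" where
  "is_dist P \<longleftrightarrow> (\<forall>x. 0 \<le> P x) \<and> sum P UNIV = 1"

definition KL :: "('a::finite \<Rightarrow> real) \<Rightarrow> ('a \<Rightarrow> real) \<Rightarrow> ereal" where
  "KL P Q = (\<Sum>x\<in>UNIV. if P x = 0 then 0 else if Q x = 0 then \<infinity>
                         else ereal (P x * ln (P x / Q x)))"

definition mixR :: "real \<Rightarrow> real \<Rightarrow> ('a \<Rightarrow> real) \<Rightarrow> ('a \<Rightarrow> real) \<Rightarrow> 'a \<Rightarrow> real" where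
  "mixR \<alpha> \<beta> P Q = (\<lambda>x. (\<alpha> * P x + \<beta> * Q x) / (\<alpha> + \<beta>))"

definition GJS :: "('a::finite \<Rightarrow> real) \<Rightarrow> ('a \<Rightarrow> real) \<Rightarrow> real \<Rightarrow> real \<Rightarrow> ereal" where
  "GJS P Q \<alpha> \<beta> = ereal \<alpha> * KL P (mixR \<alpha> \<beta> P Q) + ereal \<beta> * KL Q (mixR \<alpha> \<beta> P Q)"

text \<open>Matches: a K-match is a set of K index pairs in [M1] x [M2], no two sharing a coordinate.
  The enumeration M_t^h (h in [M2], t in [T_h]) is replaced by indexing with the match itself;
  h = card m.\<close>
definition is_match :: "nat \<Rightarrow> nat \<Rightarrow> (nat \<times> nat) set \<Rightarrow> bool" where
  "is_match M1 M2 m \<longleftrightarrow> m \<subseteq> {..<M1} \<times> {..<M2} \<and>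
     (\<forall>i j i' j'. (i, j) \<in> m \<longrightarrow> (i', j') \<in> m \<longrightarrow> (i = i' \<longleftrightarrow> j = j'))"

definition matches :: "nat \<Rightarrow> nat \<Rightarrow> (nat \<times> nat) set set" where
  "matches M1 M2 = {m. is_match M1 M2 m \<and> 1 \<le> card m \<and> card m \<le> M2}"

definition Gm :: "(nat \<times> nat) set \<Rightarrow> (nat \<Rightarrow> 'a::finite \<Rightarrow> real) \<Rightarrow> (nat \<Rightarrow> 'a \<Rightarrow> real)
                  \<Rightarrow> real \<Rightarrow> real \<Rightarrow> ereal" where
  "Gm m \<Omega> \<Psi> \<alpha> \<beta> = (\<Sum>(i, j)\<in>m. GJS (\<Omega> i) (\<Psi> j) \<alpha> \<beta>)"

definition Eexp :: "nat \<Rightarrow> nat \<Rightarrow> (nat \<Rightarrow> 'a::finite \<Rightarrow> real) \<Rightarrow> (nat \<Rightarrow> 'a \<Rightarrow> real)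
                    \<Rightarrow> (nat \<Rightarrow> 'a \<Rightarrow> real) \<Rightarrow> (nat \<Rightarrow> 'a \<Rightarrow> real) \<Rightarrow> real \<Rightarrow> real \<Rightarrow> ereal" where
  "Eexp M1 M2 P Q \<Omega> \<Psi> \<alpha> \<beta> =
     (\<Sum>i<M1. ereal \<alpha> * KL (\<Omega> i) (P i)) + (\<Sum>j<M2. ereal \<beta> * KL (\<Psi> j) (Q j))"

definition dists :: "nat \<Rightarrow> (nat \<Rightarrow> 'a::finite \<Rightarrow> real) \<Rightarrow> bool" where
  "dists M P \<longleftrightarrow> (\<forall>i<M. is_dist (P i))"

definition distinct_db :: "nat \<Rightarrow> (nat \<Rightarrow> 'a \<Rightarrow> real) \<Rightarrow> bool" where
  "distinct_db M P \<longleftrightarrow> (\<forall>i<M. \<forall>i'<M. i \<noteq> i' \<longrightarrow> P i \<noteq> P i')"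

definition hyp_class :: "nat \<Rightarrow> nat \<Rightarrow> (nat \<times> nat) set
                         \<Rightarrow> ((nat \<Rightarrow> 'a::finite \<Rightarrow> real) \<times> (nat \<Rightarrow> 'a \<Rightarrow> real)) set" where
  "hyp_class M1 M2 m = {(P, Q). dists M1 P \<and> dists M2 Q \<and> distinct_db M1 P \<and> distinct_db M2 Q \<and>
      (\<forall>i<M1. \<forall>j<M2. P i = Q j \<longleftrightarrow> (i, j) \<in> m)}"

definition null_class :: "nat \<Rightarrow> nat \<Rightarrow> ((nat \<Rightarrow> 'a::finite \<Rightarrow> real) \<times> (nat \<Rightarrow> 'a \<Rightarrow> real)) set" where
  "null_class M1 M2 = {(P, Q). dists M1 P \<and> dists M2 Q \<and> distinct_db M1 P \<and> distinct_db M2 Q \<and>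
      (\<forall>i<M1. \<forall>j<M2. P i \<noteq> Q j)}"

text \<open>Exponents (minimum over an empty set = +infinity, via Inf in ereal).\<close>
definition Er :: "real \<Rightarrow> nat \<Rightarrow> nat \<Rightarrow> (nat \<Rightarrow> 'a::finite \<Rightarrow> real) \<Rightarrow> (nat \<Rightarrow> 'a \<Rightarrow> real)
                  \<Rightarrow> real \<Rightarrow> real \<Rightarrow> ereal" where
  "Er lam M1 M2 P Q \<alpha> \<beta> = (INF (m, \<Omega>, \<Psi>) \<in> {(m, \<Omega>, \<Psi>). m \<in> matches M1 M2 \<and> dists M1 \<Omega> \<and> dists M2 \<Psi>
        \<and> Gm m \<Omega> \<Psi> \<alpha> \<beta> \<le> ereal lam}. Eexp M1 M2 P Q \<Omega> \<Psi> \<alpha> \<beta>)"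

definition Gexp :: "real \<Rightarrow> nat \<Rightarrow> nat \<Rightarrow> nat \<Rightarrow> (nat \<Rightarrow> 'a::finite \<Rightarrow> real) \<Rightarrow> (nat \<Rightarrow> 'a \<Rightarrow> real)
                  \<Rightarrow> real \<Rightarrow> real \<Rightarrow> ereal" where
  "Gexp lam M1 M2 K P Q \<alpha> \<beta> = (INF (m, \<Omega>, \<Psi>) \<in> {(m, \<Omega>, \<Psi>). m \<in> matches M1 M2 \<and> card m > K
        \<and> dists M1 \<Omega> \<and> dists M2 \<Psi> \<and> Gm m \<Omega> \<Psi> \<alpha> \<beta> \<le> ereal lam}. Eexp M1 M2 P Q \<Omega> \<Psi> \<alpha> \<beta>)"

definition Fexp :: "real \<Rightarrow> nat \<Rightarrow> nat \<Rightarrow> nat \<Rightarrow> (nat \<Rightarrow> 'a::finite \<Rightarrow> real) \<Rightarrow> (nat \<Rightarrow> 'a \<Rightarrow> real)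
                  \<Rightarrow> real \<Rightarrow> real \<Rightarrow> ereal" where
  "Fexp lam M1 M2 K P Q \<alpha> \<beta> = (INF (m1, m2, \<Omega>, \<Psi>) \<in> {(m1, m2, \<Omega>, \<Psi>).
        m1 \<in> matches M1 M2 \<and> m2 \<in> matches M1 M2 \<and> card m1 = K \<and> card m2 = K \<and> m1 \<noteq> m2
        \<and> dists M1 \<Omega> \<and> dists M2 \<Psi> \<and> Gm m1 \<Omega> \<Psi> \<alpha> \<beta> \<le> ereal lam \<and> Gm m2 \<Omega> \<Psi> \<alpha> \<beta> \<le> ereal lam}.
        Eexp M1 M2 P Q \<Omega> \<Psi> \<alpha> \<beta>)"

text \<open>Samples: x i k is the k-th sample of sequence i (i < M, k < n).\<close>
definition etype :: "nat \<Rightarrow> (nat \<Rightarrow> 'a) \<Rightarrow> 'a \<Rightarrow> real" where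
  "etype n xs a = real (card {k\<in>{..<n}. xs k = a}) / real n"

definition Sm :: "(nat \<times> nat) set \<Rightarrow> nat \<Rightarrow> nat \<Rightarrow> (nat \<Rightarrow> nat \<Rightarrow> 'a::finite) \<Rightarrow> (nat \<Rightarrow> nat \<Rightarrow> 'a)
                  \<Rightarrow> real \<Rightarrow> real \<Rightarrow> ereal" where
  "Sm m \<xi> \<chi> x y \<alpha> \<beta> = Gm m (\<lambda>i. etype \<xi> (x i)) (\<lambda>j. etype \<chi> (y j)) \<alpha> \<beta>"

definition B_event :: "nat \<Rightarrow> nat \<Rightarrow> nat \<Rightarrow> nat \<Rightarrow> real \<Rightarrow> real \<Rightarrow> real \<Rightarrow> real \<Rightarrow> (nat \<times> nat) set
                       \<Rightarrow> (nat \<Rightarrow> nat \<Rightarrow> 'a::finite) \<Rightarrow> (nat \<Rightarrow> nat \<Rightarrow> 'a) \<Rightarrow> bool" where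
  "B_event M1 M2 \<xi> \<chi> \<alpha> \<beta> lam1 lam2 m x y \<longleftrightarrow>
     Sm m \<xi> \<chi> x y \<alpha> \<beta> \<le> ereal lam1 \<and>
     (\<forall>m'\<in>matches M1 M2. card m' = card m \<and> m' \<noteq> m \<longrightarrow> Sm m' \<xi> \<chi> x y \<alpha> \<beta> > ereal lam2)"

definition accepts :: "nat \<Rightarrow> nat \<Rightarrow> nat \<Rightarrow> nat \<Rightarrow> real \<Rightarrow> real \<Rightarrow> real \<Rightarrow> real \<Rightarrow> (nat \<times> nat) set
                       \<Rightarrow> (nat \<Rightarrow> nat \<Rightarrow> 'a::finite) \<Rightarrow> (nat \<Rightarrow> nat \<Rightarrow> 'a) \<Rightarrow> bool" where
  "accepts M1 M2 \<xi> \<chi> \<alpha> \<beta> lam1 lam2 m x y \<longleftrightarrow> m \<in> matches M1 M2 \<and>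
     B_event M1 M2 \<xi> \<chi> \<alpha> \<beta> lam1 lam2 m x y \<and>
     (\<forall>m'\<in>matches M1 M2. m' \<noteq> m \<longrightarrow> \<not> B_event M1 M2 \<xi> \<chi> \<alpha> \<beta> lam1 lam2 m' x y)"

text \<open>Decision of the fixed-length test: Some m = H for match m, None = reject H_r.\<close>
definition fl_test :: "nat \<Rightarrow> nat \<Rightarrow> nat \<Rightarrow> nat \<Rightarrow> real \<Rightarrow> real \<Rightarrow> real \<Rightarrow> real
                       \<Rightarrow> (nat \<Rightarrow> nat \<Rightarrow> 'a::finite) \<Rightarrow> (nat \<Rightarrow> nat \<Rightarrow> 'a) \<Rightarrow> (nat \<times> nat) set option" where
  "fl_test M1 M2 \<xi> \<chi> \<alpha> \<beta> lam1 lam2 x y =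
     (if \<exists>m. accepts M1 M2 \<xi> \<chi> \<alpha> \<beta> lam1 lam2 m x y
      then Some (THE m. accepts M1 M2 \<xi> \<chi> \<alpha> \<beta> lam1 lam2 m x y) else None)"

definition samples :: "nat \<Rightarrow> nat \<Rightarrow> (nat \<Rightarrow> nat \<Rightarrow> 'a::finite) set" where
  "samples M n = PiE {..<M} (\<lambda>_. PiE {..<n} (\<lambda>_. UNIV))"

definition sample_prob :: "nat \<Rightarrow> nat \<Rightarrow> (nat \<Rightarrow> 'a::finite \<Rightarrow> real) \<Rightarrow> (nat \<Rightarrow> nat \<Rightarrow> 'a) \<Rightarrow> real" where
  "sample_prob M n P x = (\<Prod>i<M. \<Prod>k<n. P i (x i k))"

definition prob_event :: "nat \<Rightarrow> nat \<Rightarrow> nat \<Rightarrow> nat \<Rightarrow> (nat \<Rightarrow> 'a::finite \<Rightarrow> real) \<Rightarrow> (nat \<Rightarrow> 'a \<Rightarrow> real)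
                          \<Rightarrow> ((nat \<Rightarrow> nat \<Rightarrow> 'a) \<Rightarrow> (nat \<Rightarrow> nat \<Rightarrow> 'a) \<Rightarrow> bool) \<Rightarrow> real" where
  "prob_event M1 M2 \<xi> \<chi> P Q A =
     (\<Sum>(x, y)\<in>{(x, y). x \<in> samples M1 \<xi> \<and> y \<in> samples M2 \<chi> \<and> A x y}.
        sample_prob M1 \<xi> P x * sample_prob M2 \<chi> Q y)"

definition ssize :: "real \<Rightarrow> nat \<Rightarrow> nat" where
  "ssize \<alpha> N = nat \<lceil>\<alpha> * real N\<rceil>"

definition fl_eta where
  "fl_eta M1 M2 \<alpha> \<beta> lam1 lam2 P Q N = prob_event M1 M2 (ssize \<alpha> N) (ssize \<beta> N) P Q
     (\<lambda>x y. fl_test M1 M2 (ssize \<alpha> N) (ssize \<beta> N) \<alpha> \<beta> lam1 lam2 x y \<noteq> None)"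

definition fl_beta where
  "fl_beta M1 M2 \<alpha> \<beta> lam1 lam2 m0 P Q N = prob_event M1 M2 (ssize \<alpha> N) (ssize \<beta> N) P Q
     (\<lambda>x y. fl_test M1 M2 (ssize \<alpha> N) (ssize \<beta> N) \<alpha> \<beta> lam1 lam2 x y \<notin> {Some m0, None})"

definition fl_zeta where
  "fl_zeta M1 M2 \<alpha> \<beta> lam1 lam2 P Q N = prob_event M1 M2 (ssize \<alpha> N) (ssize \<beta> N) P Q
     (\<lambda>x y. fl_test M1 M2 (ssize \<alpha> N) (ssize \<beta> N) \<alpha> \<beta> lam1 lam2 x y = None)"

definition exprate :: "real \<Rightarrow> nat \<Rightarrow> ereal" where
  "exprate p N = (if p = 0 then \<infinity> else ereal (- ln p / real N))"

end

theory Submission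
  imports Defs "HOL-Library.Cardinality"
begin

text \<open>A sample whose empirical types are \<open>(\<Omega>, \<Psi>)\<close> has probability
  \<open>exp (- n\<^sub>1 \<Sum>\<^sub>i D(\<Omega>\<^sub>i\<parallel>P\<^sub>i) - n\<^sub>2 \<Sum>\<^sub>j D(\<Psi>\<^sub>j\<parallel>Q\<^sub>j))\<close> times its probability under its own types,
  and these own-type probabilities sum to a polynomial in \<open>N\<close> over all samples. Hence an event
  on which always \<open>E(P, Q, \<Omega>, \<Psi>) \<ge> e\<close> has probability at most \<open>poly(N) exp (- N e)\<close>, i.e.
  exponent at least \<open>e\<close>. It remains to see that each error event forces the types into the
  region defining the claimed exponent: a decision for \<open>m\<close> forces \<open>S\<^sub>m \<le> \<lambda>\<^sub>1\<close>, and under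
  \<open>H\<^sub>l\<^sup>K\<close> the statistic of any submatch of the true match is at most \<open>E\<close>, because
  \<open>GJS(\<Omega>, \<Psi>) \<le> \<alpha> D(\<Omega>\<parallel>P) + \<beta> D(\<Psi>\<parallel>P)\<close>.\<close>

definition occurrences :: "nat \<Rightarrow> (nat \<Rightarrow> 'a) \<Rightarrow> 'a \<Rightarrow> nat" where
  "occurrences n s a = card {k\<in>{..<n}. s k = a}"

lemma etype_eq_occurrences: "etype n s a = real (occurrences n s a) / real n"
  by (simp add: etype_def occurrences_def)

lemma occurrences_Suc:
  "occurrences (Suc n) s a = occurrences n s a + (if s n = a then 1 else 0)"
proof -
  have "{k\<in>{..<Suc n}. s k = a} = {k\<in>{..<n}. s k = a} \<union> (if s n = a then {n} else {})"
    by (auto simp: less_Suc_eq)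
  then show ?thesis unfolding occurrences_def by (auto simp: card_insert_if)
qed

lemma occurrences_le: "occurrences n s a \<le> n"
  unfolding occurrences_def using card_mono[of "{..<n}" "{k\<in>{..<n}. s k = a}"] by auto

lemma sum_occurrences: "(\<Sum>a\<in>(UNIV::'a::finite set). occurrences n s a) = n"
proof (induction n)
  case 0 then show ?case by (simp add: occurrences_def)
next
  case (Suc n)
  have "(\<Sum>a\<in>(UNIV::'a set). occurrences (Suc n) s a)
      = (\<Sum>a\<in>UNIV. occurrences n s a + (if s n = a then 1 else 0))"
    by (intro sum.cong) (auto simp: occurrences_Suc)
  then show ?case using Suc by (simp add: sum.distrib)
qed

lemma prod_eq_prod_power_occurrences:
  fixes f :: "'a::finite \<Rightarrow> 'b::comm_monoid_mult"
  shows "(\<Prod>k<n. f (s k)) = (\<Prod>a\<in>UNIV. f a ^ occurrences n s a)"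
proof (induction n)
  case 0 then show ?case by (simp add: occurrences_def)
next
  case (Suc n)
  have "(\<Prod>a\<in>UNIV. f a ^ occurrences (Suc n) s a)
      = (\<Prod>a\<in>UNIV. f a ^ occurrences n s a * (if s n = a then f a else 1))"
    by (intro prod.cong) (auto simp: occurrences_Suc mult.commute)
  also have "\<dots> = (\<Prod>a\<in>UNIV. f a ^ occurrences n s a) * f (s n)"
    by (simp add: prod.distrib prod.delta)
  finally show ?case using Suc by simp
qed

lemma is_dist_etype:
  assumes "0 < n"
  shows "is_dist (etype n s :: 'a::finite \<Rightarrow> real)"
proof -
  have "(\<Sum>a\<in>(UNIV::'a set). etype n s a) = real (\<Sum>a\<in>UNIV. occurrences n s a) / real n"
    by (simp add: etype_eq_occurrences sum_divide_distrib)
  then show ?thesis using assms by (simp add: is_dist_def sum_occurrences etype_def)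
qed

lemma dists_etypes: "0 < n \<Longrightarrow> dists M (\<lambda>i. etype n (x i))"
  by (simp add: dists_def is_dist_etype)

section \<open>Divergences\<close>

definition kl_term :: "real \<Rightarrow> real \<Rightarrow> real" where
  "kl_term u v = (if u = 0 then 0 else u * ln (u / v))"

definition KL_real :: "('a::finite \<Rightarrow> real) \<Rightarrow> ('a \<Rightarrow> real) \<Rightarrow> real" where
  "KL_real P Q = (\<Sum>x\<in>UNIV. kl_term (P x) (Q x))"

lemma KL_eq_KL_real: "(\<And>x. P x \<noteq> 0 \<Longrightarrow> Q x \<noteq> 0) \<Longrightarrow> KL P Q = ereal (KL_real P Q)"
  unfolding KL_def KL_real_def kl_term_def by (simp flip: sum_ereal) (intro sum.cong, auto)

lemma KL_eq_infinity: "P x \<noteq> 0 \<Longrightarrow> Q x = 0 \<Longrightarrow> KL P Q = \<infinity>"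
  unfolding KL_def by (subst sum_Pinfty) (auto intro!: bexI[of _ x])

lemma kl_term_ge:
  assumes "0 \<le> u" "0 \<le> v" "u \<noteq> 0 \<Longrightarrow> v \<noteq> 0"
  shows "u - v \<le> kl_term u v"
proof (cases "u = 0")
  case False
  with assms have u: "0 < u" and v: "0 < v" by auto
  have "1 - v / u \<le> ln (u / v)"
    using ln_le_minus_one[of "v / u"] u v by (simp add: ln_div)
  then have "u * (1 - v / u) \<le> u * ln (u / v)" using u by (intro mult_left_mono) auto
  then show ?thesis using u by (simp add: kl_term_def algebra_simps)
qed (use assms in \<open>simp add: kl_term_def\<close>)

lemma KL_real_nonneg:
  assumes "is_dist T" "\<And>x. 0 \<le> P x" "sum P UNIV \<le> 1" "\<And>x. T x \<noteq> 0 \<Longrightarrow> P x \<noteq> 0"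
  shows "0 \<le> KL_real T P"
proof -
  have "(\<Sum>x\<in>UNIV. T x - P x) \<le> KL_real T P"
    unfolding KL_real_def using assms by (intro sum_mono kl_term_ge) (auto simp: is_dist_def)
  then show ?thesis using assms by (simp add: sum_subtractf is_dist_def)
qed

lemma KL_nonneg:
  assumes "is_dist T" "is_dist P"
  shows "0 \<le> KL T P"
proof (cases "\<exists>x. T x \<noteq> 0 \<and> P x = 0")
  case True then show ?thesis using KL_eq_infinity by fastforce
next
  case False
  then show ?thesis using assms
    by (subst KL_eq_KL_real) (auto intro: KL_real_nonneg simp: is_dist_def)
qed

lemma kl_term_shift:
  assumes "0 \<le> u" "0 < r" "0 < p"
  shows "kl_term u p = kl_term u r + u * ln (r / p)"
  using assms by (cases "u = 0") (auto simp: kl_term_def ln_div algebra_simps)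

lemma is_dist_mixR:
  assumes "is_dist \<Omega>" "is_dist \<Psi>" "0 < \<alpha>" "0 < \<beta>"
  shows "is_dist (mixR \<alpha> \<beta> \<Omega> \<Psi>)"
proof -
  have "(\<Sum>x\<in>UNIV. (\<alpha> * \<Omega> x + \<beta> * \<Psi> x) / (\<alpha> + \<beta>)) = (\<alpha> * sum \<Omega> UNIV + \<beta> * sum \<Psi> UNIV) / (\<alpha> + \<beta>)"
    by (simp add: sum_divide_distrib[symmetric] sum.distrib sum_distrib_left)
  then show ?thesis using assms unfolding is_dist_def mixR_def by auto
qed

lemma KL_real_compensation:
  fixes \<Omega> \<Psi> P :: "'a::finite \<Rightarrow> real"
  assumes nn: "\<And>x. 0 \<le> \<Omega> x" "\<And>x. 0 \<le> \<Psi> x" and ab: "0 < \<alpha>" "0 < \<beta>"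
    and supp: "\<And>x. \<Omega> x \<noteq> 0 \<or> \<Psi> x \<noteq> 0 \<Longrightarrow> 0 < P x"
  shows "\<alpha> * KL_real \<Omega> P + \<beta> * KL_real \<Psi> P = \<alpha> * KL_real \<Omega> (mixR \<alpha> \<beta> \<Omega> \<Psi>)
    + \<beta> * KL_real \<Psi> (mixR \<alpha> \<beta> \<Omega> \<Psi>) + (\<alpha> + \<beta>) * KL_real (mixR \<alpha> \<beta> \<Omega> \<Psi>) P"
proof -
  let ?R = "mixR \<alpha> \<beta> \<Omega> \<Psi>"
  have "\<alpha> * kl_term (\<Omega> x) (P x) + \<beta> * kl_term (\<Psi> x) (P x) =
      \<alpha> * kl_term (\<Omega> x) (?R x) + \<beta> * kl_term (\<Psi> x) (?R x) + (\<alpha> + \<beta>) * kl_term (?R x) (P x)" for x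
  proof (cases "\<Omega> x = 0 \<and> \<Psi> x = 0")
    case False
    have mix: "(\<alpha> + \<beta>) * ?R x = \<alpha> * \<Omega> x + \<beta> * \<Psi> x" using ab by (simp add: mixR_def)
    have R: "0 < ?R x"
      using False ab nn[of x] by (auto simp: mixR_def add_pos_nonneg add_nonneg_pos order_le_less)
    have "(\<alpha> + \<beta>) * kl_term (?R x) (P x) = (\<alpha> * \<Omega> x + \<beta> * \<Psi> x) * ln (?R x / P x)"
      using R by (simp add: kl_term_def flip: mix)
    then show ?thesis
      using False supp[of x] by (simp add: kl_term_shift[OF nn(1) R] kl_term_shift[OF nn(2) R]
          distrib_left distrib_right)
  qed (simp add: kl_term_def mixR_def)
  then show ?thesis by (simp add: KL_real_def sum_distrib_left flip: sum.distrib)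
qed

lemma GJS_le_KL:
  fixes \<Omega> \<Psi> P :: "'a::finite \<Rightarrow> real"
  assumes d: "is_dist \<Omega>" "is_dist \<Psi>" "is_dist P" and ab: "0 < \<alpha>" "0 < \<beta>"
  shows "GJS \<Omega> \<Psi> \<alpha> \<beta> \<le> ereal \<alpha> * KL \<Omega> P + ereal \<beta> * KL \<Psi> P"
proof (cases "\<exists>x. P x = 0 \<and> (\<Omega> x \<noteq> 0 \<or> \<Psi> x \<noteq> 0)")
  case True
  have "0 \<le> KL \<Omega> P" "0 \<le> KL \<Psi> P" using d by (auto intro: KL_nonneg)
  moreover have "KL \<Omega> P = \<infinity> \<or> KL \<Psi> P = \<infinity>" using True by (auto intro: KL_eq_infinity)
  ultimately have "ereal \<alpha> * KL \<Omega> P + ereal \<beta> * KL \<Psi> P = \<infinity>"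
    using ab by (cases "KL \<Omega> P"; cases "KL \<Psi> P") auto
  then show ?thesis by (metis ereal_less_eq(1))
next
  case False
  let ?R = "mixR \<alpha> \<beta> \<Omega> \<Psi>"
  have nn: "0 \<le> \<Omega> x" "0 \<le> \<Psi> x" "0 \<le> P x" for x using d by (auto simp: is_dist_def)
  have R0: "?R x = 0 \<longleftrightarrow> \<Omega> x = 0 \<and> \<Psi> x = 0" for x
    using ab nn[of x] by (simp add: mixR_def add_nonneg_eq_0_iff)
  have supp: "0 < P x" if "\<Omega> x \<noteq> 0 \<or> \<Psi> x \<noteq> 0" for x
    using False that nn(3)[of x] by (auto simp: order_le_less)
  have "P x \<noteq> 0" if "?R x \<noteq> 0" for x using that R0 supp by force
  then have "0 \<le> KL_real ?R P"
    using d ab by (intro KL_real_nonneg is_dist_mixR) (auto simp: is_dist_def)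
  moreover have "\<alpha> * KL_real \<Omega> P + \<beta> * KL_real \<Psi> P
      = \<alpha> * KL_real \<Omega> ?R + \<beta> * KL_real \<Psi> ?R + (\<alpha> + \<beta>) * KL_real ?R P"
    using KL_real_compensation[of \<Omega> \<Psi> \<alpha> \<beta> P, OF nn(1) nn(2) ab supp] .
  ultimately have "\<alpha> * KL_real \<Omega> ?R + \<beta> * KL_real \<Psi> ?R \<le> \<alpha> * KL_real \<Omega> P + \<beta> * KL_real \<Psi> P"
    using ab by simp
  moreover have "KL \<Omega> P = ereal (KL_real \<Omega> P)" "KL \<Psi> P = ereal (KL_real \<Psi> P)"
    using False by (auto intro!: KL_eq_KL_real)
  moreover have "KL \<Omega> ?R = ereal (KL_real \<Omega> ?R)" "KL \<Psi> ?R = ereal (KL_real \<Psi> ?R)"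
    using R0 by (auto intro!: KL_eq_KL_real)
  ultimately show ?thesis unfolding GJS_def by simp
qed

lemma Gm_le_Eexp:
  fixes P Q \<Omega> \<Psi> :: "nat \<Rightarrow> 'a::finite \<Rightarrow> real"
  assumes d: "dists M1 P" "dists M2 Q" "dists M1 \<Omega>" "dists M2 \<Psi>" and m: "is_match M1 M2 m"
    and eq: "\<And>i j. (i, j) \<in> m \<Longrightarrow> P i = Q j" and ab: "0 < \<alpha>" "0 < \<beta>"
  shows "Gm m \<Omega> \<Psi> \<alpha> \<beta> \<le> Eexp M1 M2 P Q \<Omega> \<Psi> \<alpha> \<beta>"
proof -
  have sub: "m \<subseteq> {..<M1} \<times> {..<M2}" using m by (simp add: is_match_def)
  have inj: "inj_on fst m" "inj_on snd m" using m unfolding is_match_def inj_on_def by fastforce+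
  have nn: "0 \<le> ereal \<alpha> * KL (\<Omega> i) (P i)" if "i < M1" for i
    using d that ab by (simp add: dists_def KL_nonneg)
  have nn': "0 \<le> ereal \<beta> * KL (\<Psi> j) (Q j)" if "j < M2" for j
    using d that ab by (simp add: dists_def KL_nonneg)
  have "GJS (\<Omega> i) (\<Psi> j) \<alpha> \<beta> \<le> ereal \<alpha> * KL (\<Omega> i) (P i) + ereal \<beta> * KL (\<Psi> j) (Q j)"
    if "(i, j) \<in> m" for i j
    using that sub d ab eq[OF that, symmetric] GJS_le_KL[of "\<Omega> i" "\<Psi> j" "P i"]
    by (auto simp: dists_def)
  then have "Gm m \<Omega> \<Psi> \<alpha> \<beta>
      \<le> (\<Sum>(i, j)\<in>m. ereal \<alpha> * KL (\<Omega> i) (P i) + ereal \<beta> * KL (\<Psi> j) (Q j))"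
    unfolding Gm_def by (intro sum_mono) auto
  also have "\<dots> = (\<Sum>i\<in>fst ` m. ereal \<alpha> * KL (\<Omega> i) (P i)) + (\<Sum>j\<in>snd ` m. ereal \<beta> * KL (\<Psi> j) (Q j))"
    by (simp add: sum.distrib sum.reindex[OF inj(1)] sum.reindex[OF inj(2)] case_prod_beta)
  also have "\<dots> \<le> Eexp M1 M2 P Q \<Omega> \<Psi> \<alpha> \<beta>"
    unfolding Eexp_def using sub nn nn' by (intro add_mono sum_mono2) auto
  finally show ?thesis .
qed

section \<open>The method of types\<close>

lemma prod_eq_0_if_etype_outside_support:
  fixes P :: "'a::finite \<Rightarrow> real"
  assumes "etype n s a \<noteq> 0" "P a = 0"
  shows "(\<Prod>k<n. P (s k)) = 0"
proof -
  have "{k\<in>{..<n}. s k = a} \<noteq> {}" using assms(1) by (auto simp: etype_def)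
  then show ?thesis using assms(2) by (auto intro: prod_zero)
qed

lemma prod_eq_prod_etype_mult_exp_KL:
  fixes P :: "'a::finite \<Rightarrow> real"
  assumes "0 < n" "\<And>a. 0 \<le> P a" "\<And>a. etype n s a \<noteq> 0 \<Longrightarrow> P a \<noteq> 0"
  shows "(\<Prod>k<n. P (s k)) = (\<Prod>k<n. etype n s (s k)) * exp (- real n * KL_real (etype n s) P)"
proof -
  let ?T = "etype n s"
  have "P a ^ occurrences n s a = ?T a ^ occurrences n s a * exp (- real n * kl_term (?T a) (P a))"
    for a
  proof (cases "occurrences n s a = 0")
    case False
    then have t: "?T a > 0" using assms(1) by (simp add: etype_eq_occurrences)
    then have p: "P a > 0" using assms(2,3)[of a] by (auto simp: order_le_less)
    have "real n * ?T a = real (occurrences n s a)"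
      using assms(1) by (simp add: etype_eq_occurrences)
    moreover have "ln (?T a / P a) = - ln (P a / ?T a)"
      using t p by (simp add: ln_div)
    ultimately have "- real n * kl_term (?T a) (P a) = real (occurrences n s a) * ln (P a / ?T a)"
      using t by (simp add: kl_term_def)
    then have "exp (- real n * kl_term (?T a) (P a)) = (P a / ?T a) ^ occurrences n s a"
      using t p by (simp add: ln_realpow[symmetric])
    then show ?thesis using t by (simp add: power_divide)
  qed (simp add: etype_eq_occurrences kl_term_def)
  then have "(\<Prod>a\<in>UNIV. P a ^ occurrences n s a)
      = (\<Prod>a\<in>UNIV. ?T a ^ occurrences n s a) * (\<Prod>a\<in>UNIV. exp (- real n * kl_term (?T a) (P a)))"
    by (simp add: prod.distrib)
  then show ?thesis
    by (simp add: prod_eq_prod_power_occurrences[symmetric] KL_real_def exp_sum sum_distrib_left)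
qed

text \<open>Grouping sequences by their occurrence counts: the own-type probabilities of the sequences
  of one type class sum to at most one, and there are at most \<open>(n + 1) ^ CARD('a)\<close> classes.\<close>
lemma sum_prod_etype_le:
  assumes n: "0 < n"
  shows "(\<Sum>s\<in>PiE {..<n} (\<lambda>_. UNIV::'a::finite set). \<Prod>k<n. etype n s (s k))
    \<le> real ((n + 1) ^ CARD('a))"
proof -
  let ?S = "PiE {..<n} (\<lambda>_. UNIV::'a set)"
  let ?V = "PiE (UNIV::'a set) (\<lambda>_. {..n})"
  let ?f = "\<lambda>s. \<Prod>k<n. etype n s (s k)"
  have fin: "finite ?S" "finite ?V" by (auto intro!: finite_PiE)
  have img: "occurrences n ` ?S \<subseteq> ?V" using occurrences_le by (auto simp: PiE_iff)
  have one_class: "(\<Sum>s\<in>{s\<in>?S. occurrences n s = c}. ?f s) \<le> 1" for c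
  proof (cases "\<exists>s0. occurrences n s0 = c")
    case True
    then obtain s0 where s0: "occurrences n s0 = c" by blast
    let ?g = "\<lambda>s. \<Prod>k<n. real (c (s k)) / real n"
    have "(\<Sum>s\<in>{s\<in>?S. occurrences n s = c}. ?f s) = (\<Sum>s\<in>{s\<in>?S. occurrences n s = c}. ?g s)"
      by (intro sum.cong refl prod.cong) (auto simp: etype_eq_occurrences)
    also have "\<dots> \<le> (\<Sum>s\<in>?S. ?g s)"
      by (intro sum_mono2 fin prod_nonneg divide_nonneg_nonneg) auto
    also have "\<dots> = (\<Prod>k<n. \<Sum>a\<in>UNIV. real (c a) / real n)"
      by (rule prod_sum_PiE[symmetric]) auto
    also have "(\<Sum>a\<in>UNIV. real (c a) / real n) = 1"
      using n s0 sum_occurrences[of n s0]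
      by (simp add: sum_divide_distrib[symmetric] flip: of_nat_sum)
    finally show ?thesis by simp
  qed simp
  have "(\<Sum>s\<in>?S. ?f s) = (\<Sum>c\<in>?V. \<Sum>s\<in>{s\<in>?S. occurrences n s = c}. ?f s)"
    by (rule sum.group[OF fin img, symmetric])
  also have "\<dots> \<le> (\<Sum>c\<in>?V. 1)" by (intro sum_mono one_class)
  finally show ?thesis by (simp add: card_PiE)
qed

definition own_type_prob :: "nat \<Rightarrow> nat \<Rightarrow> (nat \<Rightarrow> nat \<Rightarrow> 'a) \<Rightarrow> real" where
  "own_type_prob M n x = (\<Prod>i<M. \<Prod>k<n. etype n (x i) (x i k))"

lemma own_type_prob_nonneg: "0 \<le> own_type_prob M n x"
  unfolding own_type_prob_def etype_def by (intro prod_nonneg) auto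

lemma sum_own_type_prob_le:
  assumes "0 < n"
  shows "(\<Sum>x\<in>samples M n. own_type_prob M n (x :: nat \<Rightarrow> nat \<Rightarrow> 'a::finite))
    \<le> real ((n + 1) ^ (CARD('a) * M))"
proof -
  have "(\<Sum>x\<in>samples M n. own_type_prob M n (x :: nat \<Rightarrow> nat \<Rightarrow> 'a))
      = (\<Prod>i<M. \<Sum>s\<in>PiE {..<n} (\<lambda>_. UNIV::'a set). \<Prod>k<n. etype n s (s k))"
    unfolding own_type_prob_def samples_def by (subst prod_sum_PiE) (auto intro!: finite_PiE)
  also have "\<dots> \<le> (\<Prod>i<M. real ((n + 1) ^ CARD('a)))"
    using assms by (intro prod_mono conjI sum_prod_etype_le sum_nonneg prod_nonneg)
      (auto simp: etype_def)
  finally show ?thesis by (simp add: power_mult)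
qed

lemma sample_prob_typeE:
  assumes "0 < n" "dists M P" "sample_prob M n P x \<noteq> 0"
  obtains S where "0 \<le> S" "(\<Sum>i<M. ereal c * KL (etype n (x i)) (P i)) = ereal (c * S)"
    "sample_prob M n P x = own_type_prob M n x * exp (- real n * S)"
proof
  have supp: "P i a \<noteq> 0" if "i < M" "etype n (x i) a \<noteq> 0" for i a
    using assms(3) that prod_eq_0_if_etype_outside_support[of n "x i" a "P i"]
    by (auto simp: sample_prob_def intro: prod_zero)
  have P: "is_dist (P i)" if "i < M" for i using assms(2) that by (simp add: dists_def)
  let ?S = "\<Sum>i<M. KL_real (etype n (x i)) (P i)"
  show "0 \<le> ?S"
    using P supp by (intro sum_nonneg KL_real_nonneg is_dist_etype assms(1))
      (auto simp: is_dist_def)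
  show "(\<Sum>i<M. ereal c * KL (etype n (x i)) (P i)) = ereal (c * ?S)"
    using supp by (simp add: KL_eq_KL_real sum_distrib_left)
  have "sample_prob M n P x
      = (\<Prod>i<M. (\<Prod>k<n. etype n (x i) (x i k)) * exp (- real n * KL_real (etype n (x i)) (P i)))"
    unfolding sample_prob_def using assms(1) P supp
    by (intro prod.cong refl prod_eq_prod_etype_mult_exp_KL) (auto simp: is_dist_def)
  then show "sample_prob M n P x = own_type_prob M n x * exp (- real n * ?S)"
    by (simp add: own_type_prob_def prod.distrib exp_sum sum_distrib_left)
qed

lemma sample_prob_nonneg: "dists M P \<Longrightarrow> 0 \<le> sample_prob M n P x"
  unfolding sample_prob_def dists_def is_dist_def by (intro prod_nonneg) auto

lemma sample_pair_prob_le: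
  fixes P Q :: "nat \<Rightarrow> 'a::finite \<Rightarrow> real"
  assumes n: "0 < n1" "0 < n2" "\<alpha> * real N \<le> real n1" "\<beta> * real N \<le> real n2"
    and PQ: "dists M1 P" "dists M2 Q"
    and E: "ereal e \<le> Eexp M1 M2 P Q (\<lambda>i. etype n1 (x i)) (\<lambda>j. etype n2 (y j)) \<alpha> \<beta>"
  shows "sample_prob M1 n1 P x * sample_prob M2 n2 Q y
    \<le> own_type_prob M1 n1 x * own_type_prob M2 n2 y * exp (- real N * e)"
proof (cases "sample_prob M1 n1 P x = 0 \<or> sample_prob M2 n2 Q y = 0")
  case True
  then show ?thesis using own_type_prob_nonneg[of M1 n1 x] own_type_prob_nonneg[of M2 n2 y] by auto
next
  case False
  obtain S1 where S1: "0 \<le> S1" "(\<Sum>i<M1. ereal \<alpha> * KL (etype n1 (x i)) (P i)) = ereal (\<alpha> * S1)"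
    "sample_prob M1 n1 P x = own_type_prob M1 n1 x * exp (- real n1 * S1)"
    using sample_prob_typeE[OF n(1) PQ(1)] False by metis
  obtain S2 where S2: "0 \<le> S2" "(\<Sum>j<M2. ereal \<beta> * KL (etype n2 (y j)) (Q j)) = ereal (\<beta> * S2)"
    "sample_prob M2 n2 Q y = own_type_prob M2 n2 y * exp (- real n2 * S2)"
    using sample_prob_typeE[OF n(2) PQ(2)] False by metis
  have "e \<le> \<alpha> * S1 + \<beta> * S2" using E by (simp add: Eexp_def S1(2) S2(2))
  then have "real N * e \<le> (\<alpha> * real N) * S1 + (\<beta> * real N) * S2"
    using mult_left_mono[of e "\<alpha> * S1 + \<beta> * S2" "real N"] by (simp add: algebra_simps)
  also have "\<dots> \<le> real n1 * S1 + real n2 * S2"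
    using n S1(1) S2(1) by (intro add_mono mult_right_mono) auto
  finally have "exp (- real n1 * S1) * exp (- real n2 * S2) \<le> exp (- real N * e)"
    by (simp flip: exp_add)
  then show ?thesis unfolding S1(3) S2(3)
    by (simp add: mult_ac mult_left_mono mult_nonneg_nonneg own_type_prob_nonneg)
qed

lemma prob_event_le_exp:
  fixes P Q :: "nat \<Rightarrow> 'a::finite \<Rightarrow> real"
  assumes n: "0 < n1" "0 < n2" "\<alpha> * real N \<le> real n1" "\<beta> * real N \<le> real n2"
    and PQ: "dists M1 P" "dists M2 Q"
    and E: "\<And>x y. x \<in> samples M1 n1 \<Longrightarrow> y \<in> samples M2 n2 \<Longrightarrow> A x y \<Longrightarrow>
      ereal e \<le> Eexp M1 M2 P Q (\<lambda>i. etype n1 (x i)) (\<lambda>j. etype n2 (y j)) \<alpha> \<beta>"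
  shows "prob_event M1 M2 n1 n2 P Q A
    \<le> real ((n1 + 1) ^ (CARD('a) * M1) * (n2 + 1) ^ (CARD('a) * M2)) * exp (- real N * e)"
proof -
  let ?S1 = "samples M1 n1 :: (nat \<Rightarrow> nat \<Rightarrow> 'a) set"
  let ?S2 = "samples M2 n2 :: (nat \<Rightarrow> nat \<Rightarrow> 'a) set"
  let ?W = "\<lambda>(x, y). own_type_prob M1 n1 x * own_type_prob M2 n2 y * exp (- real N * e)"
  have fin: "finite ?S1" "finite ?S2" unfolding samples_def by (auto intro!: finite_PiE)
  have "prob_event M1 M2 n1 n2 P Q A \<le> (\<Sum>(x, y)\<in>{(x, y). x \<in> ?S1 \<and> y \<in> ?S2 \<and> A x y}. ?W (x, y))"
    unfolding prob_event_def using sample_pair_prob_le[OF n PQ E] by (intro sum_mono) auto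
  also have "\<dots> \<le> (\<Sum>(x, y)\<in>?S1 \<times> ?S2. ?W (x, y))"
    using fin by (intro sum_mono2) (auto intro!: mult_nonneg_nonneg own_type_prob_nonneg)
  also have "\<dots> = (\<Sum>x\<in>?S1. own_type_prob M1 n1 x) * (\<Sum>y\<in>?S2. own_type_prob M2 n2 y)
      * exp (- real N * e)"
    by (simp add: sum_distrib_left sum_distrib_right sum.cartesian_product[symmetric])
      (rule sum.swap)
  also have "\<dots> \<le> real ((n1 + 1) ^ (CARD('a) * M1)) * real ((n2 + 1) ^ (CARD('a) * M2))
      * exp (- real N * e)"
    using n by (intro mult_right_mono mult_mono sum_own_type_prob_le sum_nonneg own_type_prob_nonneg)
      auto
  finally show ?thesis by simp
qed

section \<open>From probability bounds to exponents\<close>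

lemma ssize_pos: "0 < \<alpha> \<Longrightarrow> 0 < N \<Longrightarrow> 0 < ssize \<alpha> N"
  unfolding ssize_def by simp

lemma ssize_ge: "\<alpha> * real N \<le> real (ssize \<alpha> N)"
  unfolding ssize_def by (rule real_nat_ceiling_ge)

lemma exprate_ge_if_le_exp:
  assumes "0 < N" "0 < C" "0 \<le> p" "p \<le> C * exp (- real N * e)"
  shows "ereal (e - ln C / real N) \<le> exprate p N"
proof (cases "p = 0")
  case False
  then have "ln p \<le> ln (C * exp (- real N * e))" using assms by simp
  also have "\<dots> = ln C - real N * e" using assms by (simp add: ln_mult)
  finally have "(real N * e - ln C) / real N \<le> - ln p / real N"
    using assms(1) by (intro divide_right_mono) auto
  then show ?thesis using False assms(1) by (simp add: exprate_def diff_divide_distrib)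
qed (simp add: exprate_def)

lemma liminf_exprate_ge:
  fixes p C :: "nat \<Rightarrow> real" and X :: ereal
  assumes C: "(\<lambda>N. ln (C N) / real N) \<longlonglongrightarrow> 0" "\<And>N. 0 < N \<Longrightarrow> 0 < C N"
    and p: "\<And>N. 0 \<le> p N" "\<And>N e. 0 < N \<Longrightarrow> ereal e \<le> X \<Longrightarrow> p N \<le> C N * exp (- real N * e)"
  shows "X \<le> liminf (\<lambda>N. exprate (p N) N)"
  unfolding le_Liminf_iff
proof (intro allI impI)
  fix y assume "y < X"
  then obtain z where z: "y < ereal z" "ereal z < X" using ereal_dense2 by blast
  have "(\<lambda>N. ereal (z - ln (C N) / real N)) \<longlonglongrightarrow> ereal z"
    using tendsto_diff[OF tendsto_const C(1), of z] by (simp add: tendsto_ereal)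
  then have "\<forall>\<^sub>F N in sequentially. y < ereal (z - ln (C N) / real N)"
    using z(1) by (rule order_tendstoD)
  then show "\<forall>\<^sub>F N in sequentially. y < exprate (p N) N"
    using eventually_gt_at_top[of 0]
  proof eventually_elim
    case (elim N)
    with z(2) show ?case
      using exprate_ge_if_le_exp[OF elim(2) C(2) p(1) p(2)]
      by (meson less_imp_le order_less_le_trans)
  qed
qed

lemma ln_ssize_over_N_tendsto_0:
  assumes "0 < \<alpha>"
  shows "(\<lambda>N. ln (real (ssize \<alpha> N + 1)) / real N) \<longlonglongrightarrow> 0"
proof (rule tendsto_sandwich[of "\<lambda>_. 0" _ _ "\<lambda>N. ln (\<alpha> + 2) / real N + ln (real N) / real N"])
  show "\<forall>\<^sub>F N in sequentially. ln (real (ssize \<alpha> N + 1)) / real N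
    \<le> ln (\<alpha> + 2) / real N + ln (real N) / real N"
    using eventually_gt_at_top[of "0::nat"]
  proof eventually_elim
    case (elim N)
    have "real (ssize \<alpha> N) \<le> \<alpha> * real N + 1" unfolding ssize_def using assms
      by (simp add: of_nat_nat)
    then have "real (ssize \<alpha> N + 1) \<le> (\<alpha> + 2) * real N" using elim by (simp add: algebra_simps)
    then have "ln (real (ssize \<alpha> N + 1)) \<le> ln ((\<alpha> + 2) * real N)" by simp
    also have "\<dots> = ln (\<alpha> + 2) + ln (real N)" using assms elim by (simp add: ln_mult)
    finally show ?case using elim by (simp add: add_divide_distrib[symmetric] divide_right_mono)
  qed
  have "(\<lambda>N. ln (real N) / real N) \<longlonglongrightarrow> 0"
    using filterlim_compose[OF ln_x_over_x_tendsto_0 filterlim_real_sequentially]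
    by (simp add: o_def)
  then show "(\<lambda>N. ln (\<alpha> + 2) / real N + ln (real N) / real N) \<longlonglongrightarrow> 0"
    using tendsto_add[OF lim_const_over_n[of "ln (\<alpha> + 2)"]] by simp
qed auto

lemma liminf_exprate_prob_event_ge:
  fixes P Q :: "nat \<Rightarrow> 'a::finite \<Rightarrow> real"
  assumes ab: "0 < \<alpha>" "0 < \<beta>" and PQ: "dists M1 P" "dists M2 Q"
    and E: "\<And>N x y. 0 < N \<Longrightarrow> A N x y \<Longrightarrow>
      X \<le> Eexp M1 M2 P Q (\<lambda>i. etype (ssize \<alpha> N) (x i)) (\<lambda>j. etype (ssize \<beta> N) (y j)) \<alpha> \<beta>"
  shows "X \<le> liminf (\<lambda>N. exprate (prob_event M1 M2 (ssize \<alpha> N) (ssize \<beta> N) P Q (A N)) N)"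
proof (rule liminf_exprate_ge)
  let ?C = "\<lambda>N. real ((ssize \<alpha> N + 1) ^ (CARD('a) * M1) * (ssize \<beta> N + 1) ^ (CARD('a) * M2))"
  have "ln (?C N) / real N = real (CARD('a) * M1) * (ln (real (ssize \<alpha> N + 1)) / real N)
      + real (CARD('a) * M2) * (ln (real (ssize \<beta> N + 1)) / real N)" for N
    by (simp add: ln_mult ln_realpow add_divide_distrib)
  then show "(\<lambda>N. ln (?C N) / real N) \<longlonglongrightarrow> 0"
    using tendsto_add[OF tendsto_mult[OF tendsto_const ln_ssize_over_N_tendsto_0[OF ab(1)]]
        tendsto_mult[OF tendsto_const ln_ssize_over_N_tendsto_0[OF ab(2)]]]
    by simp
  show "0 < ?C N" for N by simp
  show "0 \<le> prob_event M1 M2 (ssize \<alpha> N) (ssize \<beta> N) P Q (A N)" for N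
    unfolding prob_event_def using PQ
    by (intro sum_nonneg) (auto intro!: mult_nonneg_nonneg sample_prob_nonneg)
  show "prob_event M1 M2 (ssize \<alpha> N) (ssize \<beta> N) P Q (A N) \<le> ?C N * exp (- real N * e)"
    if "0 < N" "ereal e \<le> X" for N e
    by (rule prob_event_le_exp[OF ssize_pos ssize_pos ssize_ge ssize_ge PQ])
      (use that ab E in \<open>auto intro: order_trans\<close>)
qed

section \<open>Decisions of the test\<close>

lemma is_match_subset: "is_match M1 M2 m0 \<Longrightarrow> m \<subseteq> m0 \<Longrightarrow> is_match M1 M2 m"
  unfolding is_match_def by blast

lemma Gm_le_Eexp_if_submatch:
  fixes P Q \<Omega> \<Psi> :: "nat \<Rightarrow> 'a::finite \<Rightarrow> real"
  assumes h: "(P, Q) \<in> hyp_class M1 M2 m0" and m0: "m0 \<in> matches M1 M2" and sub: "m \<subseteq> m0"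
    and d: "dists M1 \<Omega>" "dists M2 \<Psi>" and ab: "0 < \<alpha>" "0 < \<beta>"
  shows "Gm m \<Omega> \<Psi> \<alpha> \<beta> \<le> Eexp M1 M2 P Q \<Omega> \<Psi> \<alpha> \<beta>"
proof (rule Gm_le_Eexp[OF _ _ d _ _ ab])
  show m: "is_match M1 M2 m" using m0 sub by (auto simp: matches_def intro: is_match_subset)
  show "P i = Q j" if "(i, j) \<in> m" for i j
  proof -
    have "i < M1" "j < M2" using that m by (auto simp: is_match_def)
    then show ?thesis using that sub h by (auto simp: hyp_class_def)
  qed
qed (use h in \<open>auto simp: hyp_class_def\<close>)

lemma exists_other_submatch:
  assumes m0: "m0 \<in> matches M1 M2" and m: "m \<in> matches M1 M2" and less: "card m < card m0"
  shows "\<exists>m'. m' \<in> matches M1 M2 \<and> m' \<subseteq> m0 \<and> card m' = card m \<and> m' \<noteq> m"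
proof -
  have fin: "finite m0" "finite m" using m0 m
    by (auto simp: matches_def is_match_def intro: finite_subset[of _ "{..<M1} \<times> {..<M2}"])
  have is_sub: "m' \<in> matches M1 M2" if "m' \<subseteq> m0" "card m' = card m" for m'
    using that m0 m is_match_subset by (auto simp: matches_def)
  show ?thesis
  proof (cases "m \<subseteq> m0")
    case True
    moreover have "m \<noteq> m0" using less by auto
    ultimately obtain a where a: "a \<in> m0" "a \<notin> m" by blast
    have "m \<noteq> {}" using m by (auto simp: matches_def)
    then obtain b where b: "b \<in> m" by blast
    have "card (insert a (m - {b})) = Suc (card (m - {b}))" using a fin by simp
    also have "\<dots> = card m" using b fin by (intro card_Suc_Diff1)
    finally have "card (insert a (m - {b})) = card m" .
    then show ?thesis using True a b is_sub[of "insert a (m - {b})"] by blast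
  next
    case False
    obtain m' where "m' \<subseteq> m0" "card m' = card m"
      using less obtain_subset_with_card_n[of "card m" m0] by (metis less_imp_le)
    then show ?thesis using False is_sub by blast
  qed
qed

lemma fl_test_SomeD:
  assumes "fl_test M1 M2 n1 n2 \<alpha> \<beta> l1 l2 x y = Some m"
  shows "accepts M1 M2 n1 n2 \<alpha> \<beta> l1 l2 m x y"
proof -
  have ex: "\<exists>m. accepts M1 M2 n1 n2 \<alpha> \<beta> l1 l2 m x y" using assms
    by (auto simp: fl_test_def split: if_splits)
  moreover have "\<And>m m'. accepts M1 M2 n1 n2 \<alpha> \<beta> l1 l2 m x y \<Longrightarrow> accepts M1 M2 n1 n2 \<alpha> \<beta> l1 l2 m' x y
      \<Longrightarrow> m = m'"
    unfolding accepts_def by blast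
  ultimately have "accepts M1 M2 n1 n2 \<alpha> \<beta> l1 l2 (THE m. accepts M1 M2 n1 n2 \<alpha> \<beta> l1 l2 m x y) x y"
    by (metis theI)
  then show ?thesis using assms ex by (simp add: fl_test_def)
qed

lemma fl_test_NoneD:
  "fl_test M1 M2 n1 n2 \<alpha> \<beta> l1 l2 x y = None \<Longrightarrow> \<not> accepts M1 M2 n1 n2 \<alpha> \<beta> l1 l2 m x y"
  by (auto simp: fl_test_def split: if_splits)

lemma Er_le_Eexp_if_accepted:
  fixes P Q :: "nat \<Rightarrow> 'a::finite \<Rightarrow> real"
  assumes "0 < n1" "0 < n2" "fl_test M1 M2 n1 n2 \<alpha> \<beta> l1 l2 x y \<noteq> None"
  shows "Er l1 M1 M2 P Q \<alpha> \<beta> \<le> Eexp M1 M2 P Q (\<lambda>i. etype n1 (x i)) (\<lambda>j. etype n2 (y j)) \<alpha> \<beta>"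
proof -
  obtain m where "accepts M1 M2 n1 n2 \<alpha> \<beta> l1 l2 m x y"
    using assms(3) fl_test_SomeD by blast
  then have "m \<in> matches M1 M2" "Gm m (\<lambda>i. etype n1 (x i)) (\<lambda>j. etype n2 (y j)) \<alpha> \<beta> \<le> ereal l1"
    by (auto simp: accepts_def B_event_def Sm_def)
  then show ?thesis unfolding Er_def
    by (intro INF_lower2[where i="(m, \<lambda>i. etype n1 (x i), \<lambda>j. etype n2 (y j))"])
      (auto simp: dists_etypes assms)
qed

text \<open>Under \<open>H\<^sub>l\<^sup>K\<close>, an event \<open>B\<^sub>m\<close> with \<open>m \<noteq> m0\<close> either has \<open>|m| > K\<close>, or it rules out a
  match \<open>m' \<subseteq> m0\<close> with \<open>|m'| = |m|\<close>, \<open>m' \<noteq> m\<close>, which forces \<open>S\<^sub>m\<^sub>' > \<lambda>\<^sub>2\<close>; but \<open>S\<^sub>m\<^sub>'\<close> is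
  at most the exponent \<open>E\<close> of the types, as \<open>P\<close> and \<open>Q\<close> agree along \<open>m'\<close>.\<close>
lemma min_Gexp_le_Eexp_if_B_event:
  fixes P Q :: "nat \<Rightarrow> 'a::finite \<Rightarrow> real"
  assumes n: "0 < n1" "0 < n2" and ab: "0 < \<alpha>" "0 < \<beta>"
    and h: "(P, Q) \<in> hyp_class M1 M2 m0" and m0: "m0 \<in> matches M1 M2"
    and m: "m \<in> matches M1 M2" "m \<noteq> m0" and B: "B_event M1 M2 n1 n2 \<alpha> \<beta> l1 l2 m x y"
  shows "min (Gexp l1 M1 M2 (card m0) P Q \<alpha> \<beta>) (ereal l2)
    \<le> Eexp M1 M2 P Q (\<lambda>i. etype n1 (x i)) (\<lambda>j. etype n2 (y j)) \<alpha> \<beta>"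
proof -
  define \<Omega> where "\<Omega> = (\<lambda>i. etype n1 (x i))"
  define \<Psi> where "\<Psi> = (\<lambda>j. etype n2 (y j))"
  have d: "dists M1 \<Omega>" "dists M2 \<Psi>" using n by (auto simp: \<Omega>_def \<Psi>_def dists_etypes)
  have lam2: "ereal l2 \<le> Eexp M1 M2 P Q \<Omega> \<Psi> \<alpha> \<beta>"
    if "m' \<in> matches M1 M2" "card m' = card m" "m' \<noteq> m" "m' \<subseteq> m0" for m'
  proof -
    have "ereal l2 < Gm m' \<Omega> \<Psi> \<alpha> \<beta>" using B that by (auto simp: B_event_def Sm_def \<Omega>_def \<Psi>_def)
    also have "\<dots> \<le> Eexp M1 M2 P Q \<Omega> \<Psi> \<alpha> \<beta>" by (rule Gm_le_Eexp_if_submatch[OF h m0 that(4) d ab])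
    finally show ?thesis by simp
  qed
  consider "card m0 < card m" | "card m = card m0" | "card m < card m0" by linarith
  then have "Gexp l1 M1 M2 (card m0) P Q \<alpha> \<beta> \<le> Eexp M1 M2 P Q \<Omega> \<Psi> \<alpha> \<beta>
      \<or> ereal l2 \<le> Eexp M1 M2 P Q \<Omega> \<Psi> \<alpha> \<beta>"
  proof cases
    case 1
    have "Gm m \<Omega> \<Psi> \<alpha> \<beta> \<le> ereal l1" using B by (simp add: B_event_def Sm_def \<Omega>_def \<Psi>_def)
    then have "Gexp l1 M1 M2 (card m0) P Q \<alpha> \<beta> \<le> Eexp M1 M2 P Q \<Omega> \<Psi> \<alpha> \<beta>"
      unfolding Gexp_def by (intro INF_lower2[where i="(m, \<Omega>, \<Psi>)"]) (use m d 1 in auto)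
    then show ?thesis ..
  next
    case 2
    then show ?thesis using lam2[OF m0] m(2) by auto
  next
    case 3
    then show ?thesis using exists_other_submatch[OF m0 m(1)] lam2 by blast
  qed
  then show ?thesis unfolding \<Omega>_def \<Psi>_def by (auto simp: min_le_iff_disj)
qed

lemma min_Gexp_le_Eexp_if_mismatch:
  fixes P Q :: "nat \<Rightarrow> 'a::finite \<Rightarrow> real"
  assumes "0 < n1" "0 < n2" "0 < \<alpha>" "0 < \<beta>"
    and "(P, Q) \<in> hyp_class M1 M2 m0" "m0 \<in> matches M1 M2"
    and test: "fl_test M1 M2 n1 n2 \<alpha> \<beta> l1 l2 x y \<notin> {Some m0, None}"
  shows "min (Gexp l1 M1 M2 (card m0) P Q \<alpha> \<beta>) (ereal l2)
    \<le> Eexp M1 M2 P Q (\<lambda>i. etype n1 (x i)) (\<lambda>j. etype n2 (y j)) \<alpha> \<beta>"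
proof -
  obtain m where "fl_test M1 M2 n1 n2 \<alpha> \<beta> l1 l2 x y = Some m" "m \<noteq> m0"
    using test by auto
  then have "accepts M1 M2 n1 n2 \<alpha> \<beta> l1 l2 m x y" "m \<noteq> m0" by (auto dest: fl_test_SomeD)
  then show ?thesis using assms by (intro min_Gexp_le_Eexp_if_B_event) (auto simp: accepts_def)
qed

text \<open>If \<open>B\<^sub>m\<^sub>0\<close> fails, then \<open>S\<^sub>m\<^sub>0 > \<lambda>\<^sub>1\<close>, or \<open>S\<^sub>m\<^sub>' \<le> \<lambda>\<^sub>2\<close> for another \<open>m'\<close> with \<open>|m'| = K\<close>;
  in the latter case the types lie in the region defining \<open>F\<close> unless \<open>S\<^sub>m\<^sub>0 > \<lambda>\<^sub>2\<close>.
  Throughout, \<open>S\<^sub>m\<^sub>0 \<le> E\<close>.\<close>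
lemma min_Fexp_le_Eexp_if_not_B_event:
  fixes P Q :: "nat \<Rightarrow> 'a::finite \<Rightarrow> real"
  assumes n: "0 < n1" "0 < n2" and ab: "0 < \<alpha>" "0 < \<beta>"
    and h: "(P, Q) \<in> hyp_class M1 M2 m0" and m0: "m0 \<in> matches M1 M2"
    and not_B: "\<not> B_event M1 M2 n1 n2 \<alpha> \<beta> l1 l2 m0 x y"
  shows "min (min (ereal l1) (ereal l2)) (Fexp l2 M1 M2 (card m0) P Q \<alpha> \<beta>)
    \<le> Eexp M1 M2 P Q (\<lambda>i. etype n1 (x i)) (\<lambda>j. etype n2 (y j)) \<alpha> \<beta>"
proof -
  define \<Omega> where "\<Omega> = (\<lambda>i. etype n1 (x i))"
  define \<Psi> where "\<Psi> = (\<lambda>j. etype n2 (y j))"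
  define E where "E = Eexp M1 M2 P Q \<Omega> \<Psi> \<alpha> \<beta>"
  have d: "dists M1 \<Omega>" "dists M2 \<Psi>" using n by (auto simp: \<Omega>_def \<Psi>_def dists_etypes)
  have G0: "Gm m0 \<Omega> \<Psi> \<alpha> \<beta> \<le> E"
    unfolding E_def by (rule Gm_le_Eexp_if_submatch[OF h m0 subset_refl d ab])
  from not_B consider "ereal l1 < Gm m0 \<Omega> \<Psi> \<alpha> \<beta>"
    | m' where "m' \<in> matches M1 M2" "card m' = card m0" "m' \<noteq> m0" "Gm m' \<Omega> \<Psi> \<alpha> \<beta> \<le> ereal l2"
    by (auto simp: B_event_def Sm_def \<Omega>_def \<Psi>_def not_less)
  then have "ereal l1 \<le> E \<or> ereal l2 \<le> E \<or> Fexp l2 M1 M2 (card m0) P Q \<alpha> \<beta> \<le> E"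
  proof cases
    case 2
    show ?thesis
    proof (cases "Gm m0 \<Omega> \<Psi> \<alpha> \<beta> \<le> ereal l2")
      case True
      have "Fexp l2 M1 M2 (card m0) P Q \<alpha> \<beta> \<le> E" unfolding Fexp_def E_def
        by (rule INF_lower2[where i="(m0, m', \<Omega>, \<Psi>)"]) (use 2 True d m0 in auto)
      then show ?thesis by simp
    qed (use G0 in auto)
  qed (use G0 in auto)
  then show ?thesis unfolding E_def \<Omega>_def \<Psi>_def by (auto simp: min_le_iff_disj)
qed

lemma min_exponents_le_Eexp_if_rejected:
  fixes P Q :: "nat \<Rightarrow> 'a::finite \<Rightarrow> real"
  assumes n: "0 < n1" "0 < n2" and ab: "0 < \<alpha>" "0 < \<beta>"
    and h: "(P, Q) \<in> hyp_class M1 M2 m0" and m0: "m0 \<in> matches M1 M2"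
    and test: "fl_test M1 M2 n1 n2 \<alpha> \<beta> l1 l2 x y = None"
  shows "min (min (ereal l1) (ereal l2))
      (min (Gexp l1 M1 M2 (card m0) P Q \<alpha> \<beta>) (Fexp l2 M1 M2 (card m0) P Q \<alpha> \<beta>))
    \<le> Eexp M1 M2 P Q (\<lambda>i. etype n1 (x i)) (\<lambda>j. etype n2 (y j)) \<alpha> \<beta>"
proof (cases "B_event M1 M2 n1 n2 \<alpha> \<beta> l1 l2 m0 x y")
  case True
  then obtain m where "m \<in> matches M1 M2" "m \<noteq> m0" "B_event M1 M2 n1 n2 \<alpha> \<beta> l1 l2 m x y"
    using fl_test_NoneD[OF test, of m0] m0 by (auto simp: accepts_def)
  from min_Gexp_le_Eexp_if_B_event[OF n ab h m0 this] show ?thesis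
    by (auto simp: min_le_iff_disj)
next
  case False
  from min_Fexp_le_Eexp_if_not_B_event[OF n ab h m0 False] show ?thesis
    by (auto simp: min_le_iff_disj)
qed

lemma fl_eta_exponent:
  fixes P Q :: "nat \<Rightarrow> 'a::finite \<Rightarrow> real"
  assumes "0 < \<alpha>" "0 < \<beta>" "(P, Q) \<in> null_class M1 M2"
  shows "Er lam1 M1 M2 P Q \<alpha> \<beta> \<le> liminf (\<lambda>N. exprate (fl_eta M1 M2 \<alpha> \<beta> lam1 lam2 P Q N) N)"
  unfolding fl_eta_def using assms
  by (intro liminf_exprate_prob_event_ge Er_le_Eexp_if_accepted ssize_pos)
    (auto simp: null_class_def)

lemma fl_beta_exponent:
  fixes P Q :: "nat \<Rightarrow> 'a::finite \<Rightarrow> real"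
  assumes "0 < \<alpha>" "0 < \<beta>" "m0 \<in> matches M1 M2" "(P, Q) \<in> hyp_class M1 M2 m0"
  shows "min (Gexp lam1 M1 M2 (card m0) P Q \<alpha> \<beta>) (ereal lam2)
    \<le> liminf (\<lambda>N. exprate (fl_beta M1 M2 \<alpha> \<beta> lam1 lam2 m0 P Q N) N)"
  unfolding fl_beta_def using assms
  by (intro liminf_exprate_prob_event_ge min_Gexp_le_Eexp_if_mismatch ssize_pos)
    (auto simp: hyp_class_def)

lemma fl_zeta_exponent:
  fixes P Q :: "nat \<Rightarrow> 'a::finite \<Rightarrow> real"
  assumes "0 < \<alpha>" "0 < \<beta>" "m0 \<in> matches M1 M2" "(P, Q) \<in> hyp_class M1 M2 m0"
  shows "min (min (ereal lam1) (ereal lam2))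
      (min (Gexp lam1 M1 M2 (card m0) P Q \<alpha> \<beta>) (Fexp lam2 M1 M2 (card m0) P Q \<alpha> \<beta>))
    \<le> liminf (\<lambda>N. exprate (fl_zeta M1 M2 \<alpha> \<beta> lam1 lam2 P Q N) N)"
  unfolding fl_zeta_def using assms
  by (intro liminf_exprate_prob_event_ge min_exponents_le_Eexp_if_rejected ssize_pos)
    (auto simp: hyp_class_def)

theorem theorem5:
  fixes \<alpha> \<beta> lam1 lam2 :: real and M1 M2 :: nat
  assumes "1 \<le> M2" and "M2 \<le> M1" and "0 < \<alpha>" and "0 < \<beta>" and "0 < lam1" and "0 < lam2"
  shows "(\<forall>P Q :: nat \<Rightarrow> 'a::finite \<Rightarrow> real. (P, Q) \<in> null_class M1 M2 \<longrightarrow>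
            liminf (\<lambda>N. exprate (fl_eta M1 M2 \<alpha> \<beta> lam1 lam2 P Q N) N) \<ge> Er lam1 M1 M2 P Q \<alpha> \<beta>)
       \<and> (\<forall>m0 \<in> matches M1 M2. \<forall>P Q :: nat \<Rightarrow> 'a::finite \<Rightarrow> real. (P, Q) \<in> hyp_class M1 M2 m0 \<longrightarrow>
            liminf (\<lambda>N. exprate (fl_beta M1 M2 \<alpha> \<beta> lam1 lam2 m0 P Q N) N)
              \<ge> min (Gexp lam1 M1 M2 (card m0) P Q \<alpha> \<beta>) (ereal lam2)
          \<and> liminf (\<lambda>N. exprate (fl_zeta M1 M2 \<alpha> \<beta> lam1 lam2 P Q N) N)
              \<ge> min (min (ereal lam1) (ereal lam2))
                    (min (Gexp lam1 M1 M2 (card m0) P Q \<alpha> \<beta>) (Fexp lam2 M1 M2 (card m0) P Q \<alpha> \<beta>)))"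
  using \<open>0 < \<alpha>\<close> \<open>0 < \<beta>\<close> by (auto intro!: fl_eta_exponent fl_beta_exponent fl_zeta_exponent)

end
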